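(* Let $G$ be a graph of order at least $3$ and maximum degree at most $3$. If $S\subseteq V(G)$ is such that $w_{(G,S)}(u)\geq 3$ for every $u\in V(G)\setminus S$, then $|S|\geq\frac{1}{4}(n(G)+6)$.
   Context: All graphs are finite, simple and undirected; $n(G)=|V(G)|$. For a graph $G$, a set $S\subseteq V(G)$, and vertices $u,v$ with $u\in S$ or $v\in S$, ${\rm dist}_{(G,S)}(u,v)$ is the minimum number of edges of a path $P$ in $G$ between $u$ and $v$ such that $S$ contains exactly one endvertex of $P$ and no internal vertex of $P$, and $\infty$ if no such path exists (so ${\rm dist}_{(G,S)}(u,u)=0$ for $u\in S$, and $\infty$ for distinct $u,v\in S$). For $u\in V(G)$, $w_{(G,S)}(u)=\sum_{v\in S}(1/2)^{{\rm dist}_{(G,S)}(u,v)-1}$ with $(1/2)^{\infty}=0$. *)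

theory Defs
  imports Complex_Main
begin

definition simple_graph :: "'a set \<Rightarrow> ('a \<Rightarrow> 'a \<Rightarrow> bool) \<Rightarrow> bool" where
  "simple_graph V E \<longleftrightarrow> finite V \<and> (\<forall>x y. E x y \<longrightarrow> x \<in> V \<and> y \<in> V)
     \<and> (\<forall>x y. E x y \<longrightarrow> E y x) \<and> (\<forall>x. \<not> E x x)"

definition degree :: "'a set \<Rightarrow> ('a \<Rightarrow> 'a \<Rightarrow> bool) \<Rightarrow> 'a \<Rightarrow> nat" where
  "degree V E x = card {y \<in> V. E x y}"

definition is_path :: "'a set \<Rightarrow> ('a \<Rightarrow> 'a \<Rightarrow> bool) \<Rightarrow> 'a list \<Rightarrow> bool" where
  "is_path V E xs \<longleftrightarrow> xs \<noteq> [] \<and> distinct xs \<and> set xs \<subseteq> V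
     \<and> (\<forall>i. Suc i < length xs \<longrightarrow> E (xs ! i) (xs ! Suc i))"

definition S_paths :: "'a set \<Rightarrow> ('a \<Rightarrow> 'a \<Rightarrow> bool) \<Rightarrow> 'a set \<Rightarrow> 'a \<Rightarrow> 'a \<Rightarrow> 'a list set" where
  "S_paths V E S u v = {xs. is_path V E xs \<and>
     ((hd xs = u \<and> last xs = v) \<or> (hd xs = v \<and> last xs = u)) \<and>
     card ({hd xs, last xs} \<inter> S) = 1 \<and>
     set (butlast (tl xs)) \<inter> S = {}}"

text \<open>dist_(G,S)(u,v) as number of edges (meaningful only when S_paths is nonempty; otherwise infinity).\<close>
definition S_dist :: "'a set \<Rightarrow> ('a \<Rightarrow> 'a \<Rightarrow> bool) \<Rightarrow> 'a set \<Rightarrow> 'a \<Rightarrow> 'a \<Rightarrow> nat" where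
  "S_dist V E S u v = Min (length ` S_paths V E S u v) - 1"

text \<open>w_(G,S)(u) = sum over v in S of (1/2)^(dist - 1), with (1/2)^infinity = 0.\<close>
definition S_weight :: "'a set \<Rightarrow> ('a \<Rightarrow> 'a \<Rightarrow> bool) \<Rightarrow> 'a set \<Rightarrow> 'a \<Rightarrow> real" where
  "S_weight V E S u = (\<Sum>v\<in>S. if S_paths V E S u v = {} then 0
       else (1/2::real) powi (int (S_dist V E S u v) - 1))"

end

theory Submission
  imports Defs
begin

text \<open>
  Call the vertices outside S free, and for a free vertex u let C(u) be the set of vertices reachable
  from u by a walk all of whose vertices except possibly the last are free. Grouping C(u) into
  breadth-first layers, with a_d free and b_d non-free vertices at distance d from u, the degree bound
  gives a_1 + b_1 \<le> 3 and a_(d+1) + b_(d+1) \<le> 2 a_d, while the weight of u is at most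
  \<Sum> b_d 2^(1-d). Weight at least 3 forces all these inequalities to be tight, and then
  |C(u) \<inter> S| = |C(u) - S| + 2. The sets C(u) partition the free vertices, and a vertex of S lies
  in at most three of them (one per free neighbour), so double counting over the m distinct sets gives
  min(3, m) |S| \<ge> |V - S| + 2m, which yields the bound.
\<close>

lemma weighted_slack_sum:
  fixes a b :: "nat \<Rightarrow> real" and r :: real
  shows "(\<Sum>d=1..Suc m. ((if d = 1 then 3 else 2 * a (d - 1)) - a d - b d) * r ^ (d - 1))
       = 3 + (2 * r - 1) * (\<Sum>d=1..Suc m. a d * r ^ (d - 1)) - 2 * a (Suc m) * r ^ Suc m
           - (\<Sum>d=1..Suc m. b d * r ^ (d - 1))"
  by (induction m) (simp_all add: algebra_simps sum_distrib_left)

text \<open>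
  At r = 1/2 the free terms of the slack sum cancel, so its value is 3 minus the weight; being a
  nonnegative combination of slacks, weight at least 3 makes every slack vanish, and the slack sum at
  r = 1 then gives the count.
\<close>

lemma layer_bounds_tight:
  fixes a b :: "nat \<Rightarrow> real"
  assumes first: "a 1 + b 1 \<le> 3"
    and step: "\<And>d. 1 \<le> d \<Longrightarrow> a (Suc d) + b (Suc d) \<le> 2 * a d"
    and last: "a (Suc m) = 0"
    and weight: "3 \<le> (\<Sum>d=1..Suc m. b d * (1/2) ^ (d - 1))"
  shows "(\<Sum>d=1..Suc m. b d) = (\<Sum>d=1..Suc m. a d) + 3"
proof -
  define s where "s d = (if d = 1 then 3 else 2 * a (d - 1)) - a d - b d" for d
  have s_nonneg: "0 \<le> s d" if "d \<in> {1..Suc m}" for d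
  proof (cases "d = 1")
    case False
    with that obtain e where "d = Suc e" "1 \<le> e" by (cases d) auto
    with step[of e] show ?thesis by (simp add: s_def)
  qed (use first s_def in simp)
  have "(\<Sum>d=1..Suc m. s d * (1/2) ^ (d - 1)) = 3 - (\<Sum>d=1..Suc m. b d * (1/2) ^ (d - 1))"
    using weighted_slack_sum[of a b "1/2" m] last by (simp add: s_def)
  also have "\<dots> \<le> 0" using weight by simp
  finally have "(\<Sum>d=1..Suc m. s d * (1/2) ^ (d - 1)) = 0"
    using s_nonneg by (intro antisym sum_nonneg) auto
  then have "\<forall>d\<in>{1..Suc m}. s d = 0"
    using s_nonneg by (subst (asm) sum_nonneg_eq_0_iff) auto
  then have "(\<Sum>d=1..Suc m. s d * 1 ^ (d - 1)) = 0" by simp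
  then show ?thesis
    using weighted_slack_sum[of a b 1 m] last by (simp add: s_def)
qed

lemma is_path_rev:
  assumes "is_path V E xs" and "\<And>x y. E x y \<Longrightarrow> E y x"
  shows "is_path V E (rev xs)"
  unfolding is_path_def
proof (intro conjI allI impI)
  show "rev xs \<noteq> []" "distinct (rev xs)" "set (rev xs) \<subseteq> V"
    using assms(1) unfolding is_path_def by auto
  fix i assume i: "Suc i < length (rev xs)"
  let ?j = "length xs - Suc (Suc i)"
  have "E (xs ! ?j) (xs ! Suc ?j)"
    using assms(1) i unfolding is_path_def by auto
  moreover have "Suc ?j = length xs - Suc i" using i by simp
  ultimately show "E (rev xs ! i) (rev xs ! Suc i)"
    using i assms(2) by (simp add: rev_nth)
qed

lemma set_butlast_tl_rev: "set (butlast (tl (rev xs))) = set (butlast (tl xs))"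
proof -
  have "tl (rev xs) = rev (butlast xs)" using butlast_rev[of "rev xs"] by simp
  then show ?thesis by (simp add: butlast_rev butlast_tl)
qed

lemma nth_notin_if_interior_disjoint:
  assumes "hd xs \<notin> S" and "set (butlast (tl xs)) \<inter> S = {}" and "Suc i < length xs"
  shows "xs ! i \<notin> S"
proof (cases i)
  case 0
  with assms show ?thesis by (cases xs) auto
next
  case (Suc j)
  with assms(3) have "xs ! i = butlast (tl xs) ! j" and "j < length (butlast (tl xs))"
    by (simp_all add: nth_butlast nth_tl)
  with assms(2) show ?thesis by (metis disjoint_iff nth_mem)
qed

fun reach :: "('a \<Rightarrow> 'a \<Rightarrow> bool) \<Rightarrow> 'a set \<Rightarrow> 'a \<Rightarrow> nat \<Rightarrow> 'a set" where
  "reach E S u 0 = {u}"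
| "reach E S u (Suc n) = reach E S u n \<union> {y. \<exists>x\<in>reach E S u n - S. E x y}"

lemma reach_mono: "m \<le> n \<Longrightarrow> reach E S u m \<subseteq> reach E S u n"
  by (rule lift_Suc_mono_le[of "reach E S u"]) auto

lemma reach_subset_closed:
  assumes "u \<in> X" and "\<And>x y. x \<in> X - S \<Longrightarrow> E x y \<Longrightarrow> y \<in> X"
  shows "reach E S u n \<subseteq> X"
  by (induction n) (use assms in auto)

lemma reach_predecessor:
  "y \<in> reach E S u n \<Longrightarrow> y \<noteq> u \<Longrightarrow> \<exists>x\<in>reach E S u n - S. E x y"
  by (induction n) (use reach_mono[of n "Suc n" E S u] in auto)

lemma nth_in_reach_if_inner_notin:
  assumes "is_path V E xs" and "\<forall>i. Suc i < length xs \<longrightarrow> xs ! i \<notin> S" and "i < length xs"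
  shows "xs ! i \<in> reach E S (hd xs) i"
  using assms(3)
proof (induction i)
  case 0
  with assms(1) show ?case unfolding is_path_def by (simp add: hd_conv_nth)
next
  case (Suc i)
  with assms(1,2) show ?case unfolding is_path_def by auto
qed

locale graph_with_set =
  fixes V :: "'a set" and E :: "'a \<Rightarrow> 'a \<Rightarrow> bool" and S :: "'a set"
  assumes simple: "simple_graph V E" and S_subset: "S \<subseteq> V"
begin

abbreviation "R \<equiv> reach E S"

definition component :: "'a \<Rightarrow> 'a set" where
  "component u = R u (card V)"

definition layer :: "'a \<Rightarrow> nat \<Rightarrow> 'a set" where
  "layer u d = (case d of 0 \<Rightarrow> {u} | Suc d' \<Rightarrow> R u (Suc d') - R u d')"

lemma finite_V: "finite V"
  and edge_in_V: "E x y \<Longrightarrow> x \<in> V \<and> y \<in> V"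
  and edge_sym: "E x y \<Longrightarrow> E y x"
  using simple unfolding simple_graph_def by auto

lemma finite_S: "finite S"
  using S_subset finite_V finite_subset by blast

lemma reach_subset_V: "u \<in> V \<Longrightarrow> R u n \<subseteq> V"
  by (induction n) (auto dest: edge_in_V)

lemma finite_reach: "u \<in> V \<Longrightarrow> finite (R u n)"
  using reach_subset_V finite_V finite_subset by blast

lemma reach_stabilises: "u \<in> V \<Longrightarrow> \<exists>m\<le>card V. R u (Suc m) = R u m"
proof (rule ccontr)
  assume u: "u \<in> V" and no_fix: "\<not> (\<exists>m\<le>card V. R u (Suc m) = R u m)"
  have "Suc m \<le> card (R u m)" if "m \<le> Suc (card V)" for m
    using that
  proof (induction m)
    case (Suc m)
    have "R u m \<subset> R u (Suc m)"
      using no_fix reach_mono[of m "Suc m" E S u] Suc.prems by fastforce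
    then have "card (R u m) < card (R u (Suc m))"
      using finite_reach[OF u] psubset_card_mono by blast
    with Suc show ?case by simp
  qed simp
  from this[of "Suc (card V)"] have "card V < card (R u (Suc (card V)))" by simp
  moreover have "card (R u (Suc (card V))) \<le> card V"
    using reach_subset_V[OF u] finite_V card_mono by blast
  ultimately show False by simp
qed

lemma reach_constant_after:
  assumes "R u (Suc m) = R u m" and "m \<le> n"
  shows "R u n = R u m"
  using assms(2)
proof (induction n rule: dec_induct)
  case (step n)
  then have "R u (Suc n) = R u (Suc m)" by simp
  with assms(1) show ?case by simp
qed simp

lemma reach_Suc_card_V: "u \<in> V \<Longrightarrow> R u (Suc (card V)) = component u"
  and reach_subset_component: "u \<in> V \<Longrightarrow> R u n \<subseteq> component u"
proof -
  assume "u \<in> V"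
  then obtain m where m: "m \<le> card V" "R u (Suc m) = R u m"
    using reach_stabilises by blast
  have stable: "R u n = component u" if "card V \<le> n" for n
    using reach_constant_after[OF m(2), of n] reach_constant_after[OF m(2), of "card V"] that m(1)
    unfolding component_def by simp
  show "R u (Suc (card V)) = component u" by (rule stable) simp
  show "R u n \<subseteq> component u"
    using reach_mono[of n "max n (card V)" E S u] stable[of "max n (card V)"] by simp
qed

lemma component_closed: "u \<in> V \<Longrightarrow> x \<in> component u - S \<Longrightarrow> E x y \<Longrightarrow> y \<in> component u"
  using reach_Suc_card_V[of u] unfolding component_def by auto

lemma self_in_component: "u \<in> V \<Longrightarrow> u \<in> component u"
  using reach_subset_component[of u 0] by simp

lemma component_subset_V: "u \<in> V \<Longrightarrow> component u \<subseteq> V"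
  unfolding component_def by (rule reach_subset_V)

lemma component_mono: "x \<in> V \<Longrightarrow> u \<in> component x \<Longrightarrow> component u \<subseteq> component x"
  unfolding component_def[of u]
  by (rule reach_subset_closed) (auto intro: component_closed)

lemma reach_sym: "u \<in> V - S \<Longrightarrow> x \<in> R u n - S \<Longrightarrow> u \<in> component x"
proof (induction n arbitrary: x)
  case 0
  then show ?case using self_in_component by auto
next
  case (Suc n)
  show ?case
  proof (cases "x \<in> R u n")
    case False
    with Suc.prems obtain p where p: "p \<in> R u n - S" "E p x" by auto
    have xV: "x \<in> V" and pV: "p \<in> V" using edge_in_V[OF p(2)] by auto
    have "p \<in> component x"
      using component_closed[OF xV, of x p] self_in_component[OF xV] Suc.prems edge_sym[OF p(2)]
      by auto
    with Suc.IH[OF Suc.prems(1) p(1)] component_mono[OF xV] show ?thesis by auto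
  qed (use Suc in auto)
qed

lemma component_eq: "u \<in> V - S \<Longrightarrow> x \<in> component u - S \<Longrightarrow> component x = component u"
  using component_mono[of u x] component_mono[of x u] reach_sym[of u x "card V"]
    component_subset_V[of u] unfolding component_def by auto

lemma layer_0: "layer u 0 = {u}"
  and layer_Suc: "layer u (Suc d) = R u (Suc d) - R u d"
  by (simp_all add: layer_def)

lemma layer_subset_reach: "layer u d \<subseteq> R u d"
  by (cases d) (auto simp: layer_def)

lemma finite_layer: "u \<in> V \<Longrightarrow> finite (layer u d)"
  using finite_subset[OF layer_subset_reach finite_reach] by blast

lemma layer_subset_V: "u \<in> V \<Longrightarrow> layer u d \<subseteq> V"
  using layer_subset_reach reach_subset_V by blast

lemma layer_predecessor: "y \<in> layer u (Suc d) \<Longrightarrow> \<exists>x\<in>layer u d - S. E x y"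
proof -
  assume "y \<in> layer u (Suc d)"
  then obtain x where x: "x \<in> R u d - S" "E x y" "y \<notin> R u d" by (auto simp: layer_Suc)
  show ?thesis
  proof (cases d)
    case (Suc d')
    with x have "x \<notin> R u d'" by auto
    with x Suc show ?thesis by (auto simp: layer_Suc)
  qed (use x in \<open>auto simp: layer_0\<close>)
qed

lemma sum_reach_by_layers:
  assumes "u \<in> V"
  shows "sum f (R u n \<inter> A) = sum f ({u} \<inter> A) + (\<Sum>d=1..n. sum f (layer u d \<inter> A))"
proof (induction n)
  case (Suc n)
  have split: "R u (Suc n) \<inter> A = (R u n \<inter> A) \<union> (layer u (Suc n) \<inter> A)"
    using reach_mono[of n "Suc n" E S u] by (auto simp: layer_Suc)
  have "finite (R u n \<inter> A)" "finite (layer u (Suc n) \<inter> A)"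
    using finite_reach[OF assms] finite_layer[OF assms] by auto
  then have "sum f (R u (Suc n) \<inter> A) = sum f (R u n \<inter> A) + sum f (layer u (Suc n) \<inter> A)"
    unfolding split by (rule sum.union_disjoint) (auto simp: layer_Suc)
  with Suc.IH show ?case by (simp del: reach.simps add: add.assoc)
qed simp

lemma S_path_reaches:
  assumes u: "u \<in> V - S" and v: "v \<in> S" and xs: "xs \<in> S_paths V E S u v"
  shows "v \<in> R u (length xs - 1)" and "2 \<le> length xs"
proof -
  have p: "is_path V E xs" and inner: "set (butlast (tl xs)) \<inter> S = {}"
    and ends: "(hd xs = u \<and> last xs = v) \<or> (hd xs = v \<and> last xs = u)"
    using xs unfolding S_paths_def by auto
  obtain ys where ys: "is_path V E ys" "hd ys = u" "last ys = v"
    "set (butlast (tl ys)) \<inter> S = {}" "length ys = length xs"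
  proof (cases "hd xs = u")
    case False
    with ends p have "hd (rev xs) = u" "last (rev xs) = v"
      unfolding is_path_def by (auto simp: hd_rev last_rev)
    with that[of "rev xs"] is_path_rev[OF p edge_sym] inner set_butlast_tl_rev[of xs]
    show ?thesis by simp
  qed (use that p inner ends in auto)
  have ne: "ys \<noteq> []" using ys(1) unfolding is_path_def by auto
  have "\<forall>i. Suc i < length ys \<longrightarrow> ys ! i \<notin> S"
    using nth_notin_if_interior_disjoint[of ys S] ys(2,4) u by auto
  moreover have "ys ! (length ys - 1) = v" and "length ys - 1 < length ys"
    using ys(3) ne by (simp_all add: last_conv_nth)
  ultimately show "v \<in> R u (length xs - 1)"
    using nth_in_reach_if_inner_notin[OF ys(1)] ys(2,5) by metis
  have "length ys \<noteq> 1" using ys(2,3) u v by (cases ys) auto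
  with ne ys(5) show "2 \<le> length xs" by (cases ys) auto
qed

lemma finite_S_paths: "finite (S_paths V E S u v)"
proof (rule finite_subset)
  show "S_paths V E S u v \<subseteq> {xs. set xs \<subseteq> V \<and> length xs \<le> card V}"
    unfolding S_paths_def is_path_def
    using finite_V by (auto intro: card_mono simp flip: distinct_card)
  show "finite {xs. set xs \<subseteq> V \<and> length xs \<le> card V}"
    by (rule finite_lists_length_le[OF finite_V])
qed

lemma S_paths_empty_outside_component:
  "u \<in> V - S \<Longrightarrow> v \<in> S - component u \<Longrightarrow> S_paths V E S u v = {}"
  using S_path_reaches(1) reach_subset_component by blast

text \<open>A vertex of S in layer d lies at S-distance at least d.\<close>

lemma S_dist_term_le_layer:
  assumes u: "u \<in> V - S" and v: "v \<in> layer u d \<inter> S" and paths: "S_paths V E S u v \<noteq> {}"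
  shows "(1/2::real) powi (int (S_dist V E S u v) - 1) \<le> (1/2) ^ (d - 1)"
proof -
  obtain xs where xs: "xs \<in> S_paths V E S u v" "length xs = Min (length ` S_paths V E S u v)"
    using Min_in[of "length ` S_paths V E S u v"] paths finite_S_paths by fastforce
  have dist: "S_dist V E S u v = length xs - 1" unfolding S_dist_def xs(2) ..
  have reached: "v \<in> R u (length xs - 1)" and long: "2 \<le> length xs"
    using S_path_reaches[OF u _ xs(1)] v by auto
  obtain d' where d': "d = Suc d'" "v \<notin> R u d'"
    using v u by (cases d) (auto simp: layer_0 layer_Suc)
  have "d \<le> length xs - 1"
    using reach_mono[of "length xs - 1" d' E S u] reached d' by (cases "length xs - 1 \<le> d'") auto
  then have "(1/2::real) ^ (length xs - 2) \<le> (1/2) ^ (d - 1)"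
    by (intro power_decreasing) auto
  moreover have "int (S_dist V E S u v) - 1 = int (length xs - 2)" using dist long by simp
  ultimately show ?thesis by simp
qed

lemma S_weight_le_layer_sum:
  assumes u: "u \<in> V - S"
  shows "S_weight V E S u \<le> (\<Sum>d=1..Suc (card V). card (layer u d \<inter> S) * (1/2::real) ^ (d - 1))"
proof -
  define t where "t v = (if S_paths V E S u v = {} then 0
    else (1/2::real) powi (int (S_dist V E S u v) - 1))" for v
  have uV: "u \<in> V" using u by simp
  have "S_weight V E S u = sum t (component u \<inter> S)"
    unfolding S_weight_def t_def[abs_def]
    using finite_S S_paths_empty_outside_component[OF u] by (intro sum.mono_neutral_right) auto
  also have "\<dots> = (\<Sum>d=1..Suc (card V). sum t (layer u d \<inter> S))"
    using sum_reach_by_layers[OF uV, of t "Suc (card V)" S] u reach_Suc_card_V[OF uV]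
    by (simp del: reach.simps)
  also have "\<dots> \<le> (\<Sum>d=1..Suc (card V). \<Sum>v\<in>layer u d \<inter> S. (1/2::real) ^ (d - 1))"
    using S_dist_term_le_layer[OF u] by (intro sum_mono) (auto simp: t_def)
  finally show ?thesis by simp
qed

end

locale subcubic_graph_with_set = graph_with_set +
  assumes degree_le_3: "\<forall>x\<in>V. degree V E x \<le> 3"
begin

lemma card_neighbours_le_3: "x \<in> V \<Longrightarrow> card {y \<in> V. E x y} \<le> 3"
  using degree_le_3 unfolding degree_def by auto

text \<open>Beyond the first layer every free vertex has a neighbour in the previous layer.\<close>

lemma card_layer_Suc_le:
  assumes u: "u \<in> V - S"
  shows "card (layer u (Suc d)) \<le> (if d = 0 then 3 else 2 * card (layer u d - S))"
proof (cases d)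
  case 0
  have "layer u (Suc d) \<subseteq> {y \<in> V. E u y}"
    using layer_predecessor[of _ u 0] edge_in_V 0 by (auto simp: layer_0)
  then have "card (layer u (Suc d)) \<le> card {y \<in> V. E u y}"
    using finite_V by (intro card_mono) auto
  with card_neighbours_le_3[of u] u 0 show ?thesis by simp
next
  case (Suc d')
  have uV: "u \<in> V" using u by simp
  have children: "card {y \<in> layer u (Suc d). E x y} \<le> 2" if x: "x \<in> layer u d - S" for x
  proof -
    have xV: "x \<in> V" using x layer_subset_V[OF uV] by auto
    obtain p where p: "p \<in> layer u d' - S" "E p x" using layer_predecessor[of x u d'] x Suc by auto
    have "p \<in> R u d" using p(1) layer_subset_reach reach_mono[of d' d E S u] Suc by auto
    then have "{y \<in> layer u (Suc d). E x y} \<subseteq> {y \<in> V. E x y} - {p}"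
      using layer_subset_V[OF uV, of "Suc d"] by (auto simp: layer_Suc)
    then have "card {y \<in> layer u (Suc d). E x y} \<le> card ({y \<in> V. E x y} - {p})"
      using finite_V by (intro card_mono) auto
    also have "\<dots> = card {y \<in> V. E x y} - 1"
      using edge_in_V[OF p(2)] edge_sym[OF p(2)] by (subst card_Diff_singleton) auto
    finally show ?thesis using card_neighbours_le_3[OF xV] by linarith
  qed
  have "layer u (Suc d) \<subseteq> (\<Union>x\<in>layer u d - S. {y \<in> layer u (Suc d). E x y})"
    using layer_predecessor by blast
  then have "card (layer u (Suc d)) \<le> card (\<Union>x\<in>layer u d - S. {y \<in> layer u (Suc d). E x y})"
    using finite_layer[OF uV] by (intro card_mono) auto
  also have "\<dots> \<le> (\<Sum>x\<in>layer u d - S. card {y \<in> layer u (Suc d). E x y})"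
    using finite_layer[OF uV] by (intro card_UN_le) auto
  also have "\<dots> \<le> (\<Sum>x\<in>layer u d - S. 2)" by (rule sum_mono) (rule children)
  finally show ?thesis using Suc by simp
qed

lemma component_S_surplus:
  assumes u: "u \<in> V - S" and weight: "3 \<le> S_weight V E S u"
  shows "card (component u - S) + 2 \<le> card (component u \<inter> S)"
proof -
  have uV: "u \<in> V" using u by simp
  define a where "a d = real (card (layer u d - S))" for d
  define b where "b d = real (card (layer u d \<inter> S))" for d
  have layer_card: "real (card (layer u d)) = a d + b d" for d
    using card_Int_Diff[OF finite_layer[OF uV], of d S] unfolding a_def b_def by simp
  have "(\<Sum>d=1..Suc (card V). b d) = (\<Sum>d=1..Suc (card V). a d) + 3"
  proof (rule layer_bounds_tight)
    have bound: "a (Suc d) + b (Suc d) \<le> (if d = 0 then 3 else 2 * a d)" for d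
    proof -
      have "real (card (layer u (Suc d))) \<le> (if d = 0 then 3 else 2 * a d)"
        using card_layer_Suc_le[OF u, of d] unfolding a_def by (cases "d = 0") simp_all
      then show ?thesis by (simp only: layer_card)
    qed
    show "a 1 + b 1 \<le> 3" using bound[of 0] by simp
    show "a (Suc d) + b (Suc d) \<le> 2 * a d" if "1 \<le> d" for d using bound[of d] that by simp
    show "a (Suc (card V)) = 0"
      using reach_Suc_card_V[OF uV] by (simp add: a_def layer_Suc component_def)
    show "3 \<le> (\<Sum>d=1..Suc (card V). b d * (1/2) ^ (d - 1))"
      using weight S_weight_le_layer_sum[OF u] by (simp add: b_def)
  qed
  moreover have "card (component u \<inter> S) = (\<Sum>d=1..Suc (card V). card (layer u d \<inter> S))"
    using sum_reach_by_layers[OF uV, of "\<lambda>_. 1::nat" "Suc (card V)" S] u reach_Suc_card_V[OF uV]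
    by (simp del: reach.simps)
  moreover have "card (component u - S) = 1 + (\<Sum>d=1..Suc (card V). card (layer u d - S))"
    using sum_reach_by_layers[OF uV, of "\<lambda>_. 1::nat" "Suc (card V)" "- S"] u reach_Suc_card_V[OF uV]
    by (simp del: reach.simps add: Diff_eq)
  ultimately show ?thesis
    unfolding a_def b_def by (simp flip: of_nat_sum)
qed

text \<open>Each component containing s has a free neighbour of s, and distinct components have disjoint free parts.\<close>

lemma card_components_containing_le_3:
  assumes s: "s \<in> S"
  shows "card {X \<in> component ` (V - S). s \<in> X} \<le> 3"
proof -
  let ?A = "{X \<in> component ` (V - S). s \<in> X}"
  have "\<forall>X\<in>?A. \<exists>p. p \<in> X - S \<and> E s p"
  proof
    fix X assume "X \<in> ?A"
    then obtain x where x: "x \<in> V - S" "X = component x" "s \<in> X" by auto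
    with s have "s \<noteq> x" by auto
    with x obtain p where "p \<in> X - S" "E p s"
      using reach_predecessor[of s E S x "card V"] unfolding component_def by auto
    then show "\<exists>p. p \<in> X - S \<and> E s p" using edge_sym by blast
  qed
  then obtain nb where nb: "\<And>X. X \<in> ?A \<Longrightarrow> nb X \<in> X - S \<and> E s (nb X)" by metis
  have "inj_on nb ?A"
  proof (rule inj_onI)
    fix X Y assume X: "X \<in> ?A" and Y: "Y \<in> ?A" and same: "nb X = nb Y"
    have "component (nb Z) = Z" if Z: "Z \<in> ?A" for Z
    proof -
      from Z obtain z where "z \<in> V - S" "Z = component z" by auto
      with component_eq nb[OF Z] show ?thesis by auto
    qed
    with X Y same show "X = Y" by metis
  qed
  moreover have "nb ` ?A \<subseteq> {y \<in> V. E s y}" using nb edge_in_V by blast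
  ultimately have "card ?A \<le> card {y \<in> V. E s y}"
    using finite_V by (intro card_inj_on_le) auto
  with card_neighbours_le_3[of s] s S_subset show ?thesis by auto
qed

lemma card_free_eq_sum_components:
  "card (V - S) = (\<Sum>X\<in>component ` (V - S). card (X - S))"
proof -
  let ?C = "component ` (V - S)"
  have "V - S = (\<Union>X\<in>?C. X - S)"
    using self_in_component component_subset_V by blast
  moreover have "card (\<Union>X\<in>?C. X - S) = (\<Sum>X\<in>?C. card (X - S))"
  proof (rule card_UN_disjoint)
    show "finite ?C" using finite_V by simp
    show "\<forall>X\<in>?C. finite (X - S)"
      using component_subset_V finite_V by (blast intro: finite_subset)
    show "\<forall>X\<in>?C. \<forall>Y\<in>?C. X \<noteq> Y \<longrightarrow> (X - S) \<inter> (Y - S) = {}"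
    proof (intro ballI impI)
      fix X Y assume X: "X \<in> ?C" and Y: "Y \<in> ?C" and "X \<noteq> Y"
      have "component z = X" if "z \<in> X - S" and "X \<in> ?C" for z X
        using that component_eq by blast
      with X Y \<open>X \<noteq> Y\<close> show "(X - S) \<inter> (Y - S) = {}" by blast
    qed
  qed
  ultimately show ?thesis by simp
qed

lemma sum_card_components_S_le:
  "(\<Sum>X\<in>component ` (V - S). card (X \<inter> S)) \<le> card S * min 3 (card (component ` (V - S)))"
proof -
  let ?C = "component ` (V - S)"
  have "(\<Sum>X\<in>?C. card (X \<inter> S)) = (\<Sum>X\<in>?C. \<Sum>s\<in>S. if s \<in> X then 1 else 0)"
    using finite_S by (simp add: sum.If_cases Int_commute)
  also have "\<dots> = (\<Sum>s\<in>S. card {X \<in> ?C. s \<in> X})"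
    using finite_V by (subst sum.swap) (simp add: sum.If_cases Int_def)
  also have "\<dots> \<le> (\<Sum>s\<in>S. min 3 (card ?C))"
    using card_components_containing_le_3 finite_V
    by (intro sum_mono) (auto intro: card_mono)
  finally show ?thesis by simp
qed

lemma card_free_plus_components_le:
  assumes "\<forall>u\<in>V - S. 3 \<le> S_weight V E S u"
  shows "card (V - S) + 2 * card (component ` (V - S)) \<le> card S * min 3 (card (component ` (V - S)))"
proof -
  have "card (V - S) + 2 * card (component ` (V - S)) = (\<Sum>X\<in>component ` (V - S). card (X - S) + 2)"
    by (subst sum.distrib) (simp add: card_free_eq_sum_components)
  also have "\<dots> \<le> (\<Sum>X\<in>component ` (V - S). card (X \<inter> S))"
    using component_S_surplus assms by (intro sum_mono) auto
  finally show ?thesis using sum_card_components_S_le by linarith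
qed

end

theorem theorem7:
  fixes V :: "'a set" and E :: "'a \<Rightarrow> 'a \<Rightarrow> bool" and S :: "'a set"
  assumes "simple_graph V E"
    and "card V \<ge> 3"
    and "\<forall>x\<in>V. degree V E x \<le> 3"
    and "S \<subseteq> V"
    and "\<forall>u\<in>V - S. S_weight V E S u \<ge> 3"
  shows "real (card S) \<ge> (real (card V) + 6) / 4"
proof -
  interpret subcubic_graph_with_set V E S
    using assms(1,3,4) by unfold_locales
  define c where "c = card (component ` (V - S))"
  have count: "card V - card S + 2 * c \<le> card S * min 3 c"
    using card_free_plus_components_le assms(5) card_Diff_subset[OF finite_S assms(4)]
    unfolding c_def by simp
  have S_le_V: "card S \<le> card V" using card_mono[OF finite_V assms(4)] .
  have "card V + 6 \<le> 4 * card S"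
  proof (cases "3 \<le> c")
    case False
    then consider "c = 0" | "c = 1" | "c = 2" by linarith
    then show ?thesis
    proof cases
      case 1
      then have "V \<subseteq> S" unfolding c_def using finite_V by auto
      with card_mono[OF finite_S this] S_le_V assms(2) show ?thesis by linarith
    qed (use count S_le_V assms(2) in simp_all)
  qed (use count S_le_V in \<open>simp add: min_def\<close>)
  then show ?thesis by simp
qed

end
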